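(* Let $\mathbb{L}_0$ and $\mathbb{L}_1$ be generators of Lindblad form on $M_d(\mathbb{C})$ and, for $\varepsilon\ge 0$, let $\mathbb{L}_\varepsilon=\mathbb{L}_0+\varepsilon\,\mathbb{L}_1$, generating the semigroup $\gamma^{(\varepsilon)}_t=e^{t\mathbb{L}_\varepsilon}$. Let $n(\varepsilon)$ denote the maximal number of mutually orthogonal density matrices $\rho_1,\dots,\rho_n$ (i.e. $\rho_j\rho_k=0$ for $j\neq k$) that are $\gamma^{(\varepsilon)}_t$-invariant, i.e. satisfy $\mathbb{L}_\varepsilon[\rho_j]=0$. Then $n(0)\ge n(\varepsilon)$ for all $\varepsilon$ with $0<\varepsilon\ll 1$ (i.e. for all sufficiently small $\varepsilon>0$).
   Context: A generator of Lindblad form on $M_d(\mathbb{C})$ is a linear map $\mathbb{L}[\rho]=-i[H,\rho]+\sum_\alpha\big(h_\alpha\rho h_\alpha^\dagger-\tfrac12\{h_\alpha^\dagger h_\alpha,\rho\}\big)$ with $H=H^\dagger\in M_d(\mathbb{C})$ and $h_\alpha\in M_d(\mathbb{C})$; it generates a semigroup $e^{t\mathbb{L}}$ of completely positive trace-preserving maps. A density matrix is a positive semidefinite matrix of trace one. *)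

theory Defs
  imports "HOL-Analysis.Analysis"
begin

text \<open>Matrices in M_d(C) are represented as complex^'d^'d, the dimension d = CARD('d).\<close>

type_synonym 'd cmat = "complex^'d^'d"

definition smat :: "complex \<Rightarrow> 'd::finite cmat \<Rightarrow> 'd cmat" where
  "smat c A = (\<chi> i j. c * A $ i $ j)"

definition adj :: "'d::finite cmat \<Rightarrow> 'd cmat" where
  "adj A = (\<chi> i j. cnj (A $ j $ i))"

definition hermitian :: "'d::finite cmat \<Rightarrow> bool" where
  "hermitian A \<longleftrightarrow> adj A = A"

definition cquad :: "'d::finite cmat \<Rightarrow> complex^'d \<Rightarrow> complex" where
  "cquad A x = (\<Sum>i\<in>UNIV. \<Sum>j\<in>UNIV. cnj (x $ i) * A $ i $ j * x $ j)"

definition psd :: "'d::finite cmat \<Rightarrow> bool" where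
  "psd A \<longleftrightarrow> hermitian A \<and> (\<forall>x. Im (cquad A x) = 0 \<and> Re (cquad A x) \<ge> 0)"

definition ctrace :: "'d::finite cmat \<Rightarrow> complex" where
  "ctrace A = (\<Sum>i\<in>UNIV. A $ i $ i)"

definition density :: "'d::finite cmat \<Rightarrow> bool" where
  "density \<rho> \<longleftrightarrow> psd \<rho> \<and> ctrace \<rho> = 1"

definition lindblad :: "'d::finite cmat \<Rightarrow> 'd cmat list \<Rightarrow> 'd cmat \<Rightarrow> 'd cmat" where
  "lindblad H hs \<rho> =
     smat (- \<i>) (H ** \<rho> - \<rho> ** H)
     + (\<Sum>h\<leftarrow>hs. h ** \<rho> ** adj h
                 - smat (1/2) (adj h ** h ** \<rho> + \<rho> ** (adj h ** h)))"

definition lindblad_form :: "('d::finite cmat \<Rightarrow> 'd cmat) \<Rightarrow> bool" where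
  "lindblad_form L \<longleftrightarrow> (\<exists>H hs. hermitian H \<and> L = lindblad H hs)"

definition orth_invariant_family :: "('d::finite cmat \<Rightarrow> 'd cmat) \<Rightarrow> 'd cmat list \<Rightarrow> bool" where
  "orth_invariant_family L \<rho>s \<longleftrightarrow>
     (\<forall>\<rho>\<in>set \<rho>s. density \<rho> \<and> L \<rho> = 0) \<and>
     (\<forall>j<length \<rho>s. \<forall>k<length \<rho>s. j \<noteq> k \<longrightarrow> \<rho>s ! j ** \<rho>s ! k = 0)"

definition max_orth_invariant :: "('d::finite cmat \<Rightarrow> 'd cmat) \<Rightarrow> nat" where
  "max_orth_invariant L = Max {n. \<exists>\<rho>s. length \<rho>s = n \<and> orth_invariant_family L \<rho>s}"

definition perturbed :: "('d::finite cmat \<Rightarrow> 'd cmat) \<Rightarrow> ('d cmat \<Rightarrow> 'd cmat) \<Rightarrow> real \<Rightarrow> 'd cmat \<Rightarrow> 'd cmat" where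
  "perturbed L0 L1 \<epsilon> \<rho> = L0 \<rho> + smat (complex_of_real \<epsilon>) (L1 \<rho>)"

end

theory Submission
  imports Defs
begin

text \<open>
  Density matrices form a compact set, and each defining condition of a family of mutually
  orthogonal invariant density matrices (positivity, unit trace, \<open>\<rho>\<^sub>j \<rho>\<^sub>k = 0\<close>,
  \<open>\<LL>\<^sub>\<epsilon> \<rho> = 0\<close>) is closed, jointly in \<open>\<epsilon>\<close> and the matrices, because
  \<open>(\<epsilon>, \<rho>) \<mapsto> \<LL>\<^sub>\<epsilon> \<rho>\<close> is continuous. So if families of \<open>n\<close> such matrices exist for
  parameters \<open>\<epsilon>\<^sub>k \<rightarrow> 0\<close>, a subsequence converges to such a family for \<open>\<epsilon> = 0\<close>:
  the number \<open>n(\<epsilon>)\<close> is upper semicontinuous.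
\<close>

lemma tendsto_matrix_mult:
  fixes A B :: "'a \<Rightarrow> 'd::finite cmat"
  assumes "(A \<longlongrightarrow> a) F" "(B \<longlongrightarrow> b) F"
  shows "((\<lambda>x. A x ** B x) \<longlongrightarrow> a ** b) F"
  apply (rule vec_tendstoI)+
  unfolding matrix_matrix_mult_def
  by (simp, intro tendsto_intros assms)

lemma tendsto_smat:
  fixes A :: "'a \<Rightarrow> 'd::finite cmat"
  assumes "(A \<longlongrightarrow> a) F" "(c \<longlongrightarrow> c0) F"
  shows "((\<lambda>x. smat (c x) (A x)) \<longlongrightarrow> smat c0 a) F"
  apply (rule vec_tendstoI)+
  unfolding smat_def
  by (simp, intro tendsto_intros assms)

lemma tendsto_adj:
  fixes A :: "'a \<Rightarrow> 'd::finite cmat"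
  assumes "(A \<longlongrightarrow> a) F"
  shows "((\<lambda>x. adj (A x)) \<longlongrightarrow> adj a) F"
  apply (rule vec_tendstoI)+
  unfolding adj_def
  by (simp, intro tendsto_intros assms)

lemma tendsto_lindblad:
  fixes A :: "'a \<Rightarrow> 'd::finite cmat"
  assumes "(A \<longlongrightarrow> a) F"
  shows "((\<lambda>x. lindblad H hs (A x)) \<longlongrightarrow> lindblad H hs a) F"
proof -
  have "((\<lambda>x. \<Sum>h\<leftarrow>hs. h ** A x ** adj h - smat (1/2) (adj h ** h ** A x + A x ** (adj h ** h)))
         \<longlongrightarrow> (\<Sum>h\<leftarrow>hs. h ** a ** adj h - smat (1/2) (adj h ** h ** a + a ** (adj h ** h)))) F"
    by (induction hs)
      (simp_all, intro tendsto_add tendsto_diff tendsto_smat tendsto_matrix_mult tendsto_const assms)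
  then show ?thesis
    unfolding lindblad_def
    by (intro tendsto_add tendsto_smat tendsto_diff tendsto_matrix_mult tendsto_const assms)
qed

lemma lindblad_form_tendsto:
  assumes "lindblad_form L" "(A \<longlongrightarrow> a) F"
  shows "((\<lambda>x. L (A x)) \<longlongrightarrow> L a) F"
  using assms tendsto_lindblad unfolding lindblad_form_def by blast

lemma isCont_perturbed:
  assumes "lindblad_form L0" "lindblad_form L1"
  shows "isCont (\<lambda>(\<epsilon>, A). perturbed L0 L1 \<epsilon> A) (\<epsilon>0, a)"
proof -
  have "(fst \<longlongrightarrow> \<epsilon>0) (at (\<epsilon>0, a))" "(snd \<longlongrightarrow> a) (at (\<epsilon>0, a))"
    using tendsto_fst[OF tendsto_ident_at] tendsto_snd[OF tendsto_ident_at] by auto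
  then have "((\<lambda>p. perturbed L0 L1 (fst p) (snd p)) \<longlongrightarrow> perturbed L0 L1 \<epsilon>0 a) (at (\<epsilon>0, a))"
    unfolding perturbed_def
    by (intro tendsto_add tendsto_smat lindblad_form_tendsto[OF assms(1)]
        lindblad_form_tendsto[OF assms(2)] tendsto_of_real)
  then show ?thesis
    by (simp add: isCont_def split_def)
qed

lemma cquad_eq_sum_support:
  fixes A :: "'d::finite cmat"
  assumes "\<And>l. l \<notin> S \<Longrightarrow> x $ l = 0"
  shows "cquad A x = (\<Sum>l\<in>S. \<Sum>m\<in>S. cnj (x $ l) * A $ l $ m * x $ m)"
  unfolding cquad_def using assms
  by (intro sum.mono_neutral_cong_right sum.mono_neutral_right) auto

lemma hermitian_entry_swap: "hermitian A \<Longrightarrow> A $ j $ i = cnj (A $ i $ j)"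
  unfolding hermitian_def adj_def by (metis complex_cnj_cnj vec_lambda_beta)

lemma density_entry_bound:
  fixes A :: "'d::finite cmat"
  assumes "density A"
  shows "norm (A $ i $ j) \<le> 1"
proof -
  have herm: "hermitian A" and quad: "\<And>x. Im (cquad A x) = 0 \<and> Re (cquad A x) \<ge> 0"
    and trace: "ctrace A = 1"
    using assms unfolding density_def psd_def by auto
  have "cquad A (\<chi> l. if l = k then 1 else 0) = A $ k $ k" for k
    by (subst cquad_eq_sum_support[of "{k}"]) auto
  then have diag_nonneg: "Re (A $ k $ k) \<ge> 0" for k
    using quad[of "\<chi> l. if l = k then 1 else 0"] by simp
  have diag_real: "Im (A $ k $ k) = 0" for k
    using arg_cong[OF hermitian_entry_swap[OF herm, of k k], of Im] by simp
  have "(\<Sum>k\<in>UNIV. Re (A $ k $ k)) = 1"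
    using trace unfolding ctrace_def by (metis Re_sum one_complex.simps(1))
  then have diag_le: "Re (A $ k $ k) \<le> 1" for k
    using member_le_sum[of k UNIV "\<lambda>k. Re (A $ k $ k)"] diag_nonneg by simp
  show ?thesis
  proof (cases "i = j")
    case True
    then show ?thesis
      using diag_nonneg[of i] diag_le[of i] diag_real[of i] by (simp add: cmod_eq_Re)
  next
    case False
    define z where "z = A $ i $ j"
    define t where "t = (cmod z)\<^sup>2"
    \<comment> \<open>positivity at \<open>x = e\<^sub>i - z\<^sup>* e\<^sub>j\<close> gives \<open>|z|\<^sup>2 (2 - A\<^sub>j\<^sub>j) \<le> A\<^sub>i\<^sub>i \<le> 1\<close>\<close>
    define x :: "complex ^ 'd" where "x = (\<chi> l. if l = i then 1 else if l = j then - cnj z else 0)"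
    have "cquad A x = (\<Sum>l\<in>{i, j}. \<Sum>m\<in>{i, j}. cnj (x $ l) * A $ l $ m * x $ m)"
      by (rule cquad_eq_sum_support) (simp add: x_def)
    also have "\<dots> = A $ i $ i - 2 * (z * cnj z) + (z * cnj z) * A $ j $ j"
      using False hermitian_entry_swap[OF herm, of i j] by (simp add: x_def z_def algebra_simps)
    moreover have "z * cnj z = complex_of_real t"
      unfolding t_def by (simp add: complex_norm_square[symmetric])
    ultimately have "Re (A $ i $ i) - 2 * t + t * Re (A $ j $ j) \<ge> 0"
      using quad[of x] by simp
    moreover have "t \<ge> 0"
      unfolding t_def by simp
    then have "t * (1 - Re (A $ j $ j)) \<ge> 0"
      using diag_le[of j] by simp
    ultimately have "t \<le> 1"
      using diag_le[of i] by (simp add: algebra_simps)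
    then show ?thesis
      unfolding t_def z_def by (simp add: power_le_one_iff)
  qed
qed

lemma norm_vec_le_sum: "norm (x :: 'a::real_normed_vector ^ 'n::finite) \<le> (\<Sum>i\<in>UNIV. norm (x $ i))"
  by (simp add: norm_vec_def L2_set_le_sum)

lemma density_norm_bound:
  fixes A :: "'d::finite cmat"
  assumes "density A"
  shows "norm A \<le> real CARD('d) * real CARD('d)"
proof -
  have "norm A \<le> (\<Sum>i\<in>UNIV. \<Sum>j\<in>UNIV. norm (A $ i $ j))"
    by (rule order_trans[OF norm_vec_le_sum sum_mono[OF norm_vec_le_sum]])
  also have "\<dots> \<le> (\<Sum>i\<in>(UNIV::'d set). \<Sum>j\<in>(UNIV::'d set). 1)"
    by (intro sum_mono density_entry_bound[OF assms])
  finally show ?thesis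
    by simp
qed

lemma density_limit:
  fixes X :: "nat \<Rightarrow> 'd::finite cmat"
  assumes density: "\<And>n. density (X n)" and lim: "X \<longlonglongrightarrow> A"
  shows "density A"
proof -
  have "(\<lambda>n. adj (X n)) \<longlonglongrightarrow> adj A"
    by (rule tendsto_adj[OF lim])
  moreover have "adj (X n) = X n" for n
    using density unfolding density_def psd_def hermitian_def by auto
  ultimately have "hermitian A"
    unfolding hermitian_def using lim LIMSEQ_unique by auto
  moreover have quad: "(\<lambda>n. cquad (X n) x) \<longlonglongrightarrow> cquad A x" for x
    unfolding cquad_def by (intro tendsto_intros lim)
  have "Im (cquad A x) = 0" for x
  proof -
    have "(\<lambda>n. Im (cquad (X n) x)) \<longlonglongrightarrow> Im (cquad A x)"
      by (intro tendsto_intros quad)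
    then show ?thesis
      using density unfolding density_def psd_def by (simp add: LIMSEQ_const_iff)
  qed
  moreover have "Re (cquad A x) \<ge> 0" for x
  proof -
    have "(\<lambda>n. Re (cquad (X n) x)) \<longlonglongrightarrow> Re (cquad A x)"
      by (intro tendsto_intros quad)
    then show ?thesis
      using density unfolding density_def psd_def by (simp add: LIMSEQ_le_const)
  qed
  moreover have "ctrace A = 1"
  proof -
    have "(\<lambda>n. ctrace (X n)) \<longlonglongrightarrow> ctrace A"
      unfolding ctrace_def by (intro tendsto_intros lim)
    then show ?thesis
      using density unfolding density_def by (simp add: LIMSEQ_const_iff)
  qed
  ultimately show ?thesis
    unfolding density_def psd_def by auto
qed

lemma seq_compact_density: "seq_compact {A :: 'd::finite cmat. density A}"
proof (rule bounded_closed_imp_seq_compact)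
  show "bounded {A :: 'd::finite cmat. density A}"
    unfolding bounded_iff using density_norm_bound by blast
  show "closed {A :: 'd::finite cmat. density A}"
    unfolding closed_sequential_limits using density_limit by blast
qed

lemma mult_hermitian_eq_zero_imp_inner_eq_zero:
  fixes A B :: "'d::finite cmat"
  assumes "hermitian B" "A ** B = 0"
  shows "A \<bullet> B = 0"
proof -
  have "(\<Sum>l\<in>UNIV. A $ i $ l * cnj (B $ i $ l)) = (A ** B) $ i $ i" for i
    unfolding matrix_matrix_mult_def vec_lambda_beta
    by (rule sum.cong[OF refl]) (simp only: hermitian_entry_swap[OF assms(1), of l i for l])
  then have "Re (\<Sum>l\<in>UNIV. A $ i $ l * cnj (B $ i $ l)) = 0" for i
    using assms(2) by simp
  moreover have "A $ i $ l \<bullet> B $ i $ l = Re (A $ i $ l * cnj (B $ i $ l))" for i l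
    by (simp add: inner_complex_def)
  ultimately show ?thesis
    unfolding inner_vec_def by (simp add: Re_sum)
qed

lemma density_nonzero: "density A \<Longrightarrow> A \<noteq> 0"
  unfolding density_def ctrace_def by auto

lemma orth_invariant_family_length_le:
  fixes L :: "'d::finite cmat \<Rightarrow> 'd cmat"
  assumes "orth_invariant_family L \<rho>s"
  shows "length \<rho>s \<le> DIM('d cmat)"
proof -
  have density: "\<And>\<rho>. \<rho> \<in> set \<rho>s \<Longrightarrow> density \<rho>"
    and orth: "\<And>j k. j < length \<rho>s \<Longrightarrow> k < length \<rho>s \<Longrightarrow> j \<noteq> k \<Longrightarrow> \<rho>s ! j ** \<rho>s ! k = 0"
    using assms unfolding orth_invariant_family_def by auto
  have inner: "\<rho>s ! j \<bullet> \<rho>s ! k = 0" if "j < length \<rho>s" "k < length \<rho>s" "j \<noteq> k" for j k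
    using density[of "\<rho>s ! k"] that
    by (intro mult_hermitian_eq_zero_imp_inner_eq_zero orth) (auto simp: density_def psd_def)
  have "distinct \<rho>s"
    unfolding distinct_conv_nth
    by (metis inner inner_eq_zero_iff density density_nonzero nth_mem)
  moreover have "independent (set \<rho>s)"
  proof (rule pairwise_orthogonal_independent)
    show "pairwise orthogonal (set \<rho>s)"
      unfolding pairwise_def orthogonal_def by (metis in_set_conv_nth inner)
    show "0 \<notin> set \<rho>s"
      using density density_nonzero by blast
  qed
  ultimately show ?thesis
    using independent_bound[of "set \<rho>s"] distinct_card[of \<rho>s] by simp
qed

lemma orth_invariant_family_take:
  "orth_invariant_family L \<rho>s \<Longrightarrow> orth_invariant_family L (take n \<rho>s)"
  unfolding orth_invariant_family_def by (auto dest: in_set_takeD)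

lemma
  fixes L :: "'d::finite cmat \<Rightarrow> 'd cmat"
  shows max_orth_invariant_attained:
      "\<exists>\<rho>s. length \<rho>s = max_orth_invariant L \<and> orth_invariant_family L \<rho>s"
    and max_orth_invariant_ge: "orth_invariant_family L \<rho>s \<Longrightarrow> length \<rho>s \<le> max_orth_invariant L"
proof -
  define S where "S = {n. \<exists>\<rho>s. length \<rho>s = n \<and> orth_invariant_family L \<rho>s}"
  have "finite S"
    by (rule finite_subset[of _ "{..DIM('d cmat)}"])
      (auto simp: S_def dest: orth_invariant_family_length_le)
  moreover have "0 \<in> S"
    unfolding S_def orth_invariant_family_def by (auto intro: exI[of _ "[]"])
  ultimately have "max_orth_invariant L \<in> S" "\<And>n. n \<in> S \<Longrightarrow> n \<le> max_orth_invariant L"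
    unfolding max_orth_invariant_def S_def[symmetric] using Max_in by auto
  then show "\<exists>\<rho>s. length \<rho>s = max_orth_invariant L \<and> orth_invariant_family L \<rho>s"
    and "orth_invariant_family L \<rho>s \<Longrightarrow> length \<rho>s \<le> max_orth_invariant L"
    unfolding S_def by blast+
qed

lemma orth_invariant_family_exists:
  assumes "n \<le> max_orth_invariant L"
  shows "\<exists>\<rho>s. length \<rho>s = n \<and> orth_invariant_family L \<rho>s"
proof -
  obtain \<rho>s where "length \<rho>s = max_orth_invariant L" "orth_invariant_family L \<rho>s"
    using max_orth_invariant_attained by blast
  then have "length (take n \<rho>s) = n" "orth_invariant_family L (take n \<rho>s)"
    using assms orth_invariant_family_take by auto
  then show ?thesis
    by blast
qed

lemma seq_compact_simultaneous_subseq: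
  fixes m :: nat
  assumes "seq_compact K" and "\<And>k j. j < m \<Longrightarrow> F k j \<in> K"
  shows "\<exists>r l. strict_mono (r :: nat \<Rightarrow> nat) \<and> (\<forall>j<m. (\<lambda>k. F (r k) j) \<longlonglongrightarrow> l j)"
  using assms(2)
proof (induction m)
  case 0
  show ?case
    by (rule exI[of _ id]) (auto simp: strict_mono_def)
next
  case (Suc m)
  then obtain r l where r: "strict_mono (r :: nat \<Rightarrow> nat)" and l: "\<forall>j<m. (\<lambda>k. F (r k) j) \<longlonglongrightarrow> l j"
    by auto
  have "\<forall>k. F (r k) m \<in> K"
    using Suc.prems by simp
  from seq_compactE[OF assms(1) this] obtain l' r'
    where r': "strict_mono (r' :: nat \<Rightarrow> nat)" and l': "((\<lambda>k. F (r k) m) \<circ> r') \<longlonglongrightarrow> l'"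
    by blast
  have "(\<lambda>k. F (r (r' k)) j) \<longlonglongrightarrow> (l(m := l')) j" if "j < Suc m" for j
  proof (cases "j = m")
    case True
    then show ?thesis
      using l' by (simp add: o_def)
  next
    case False
    then have "(\<lambda>k. F (r k) j) \<longlonglongrightarrow> l j"
      using l that by simp
    from LIMSEQ_subseq_LIMSEQ[OF this r'] False show ?thesis
      by (simp add: o_def)
  qed
  moreover have "strict_mono (\<lambda>k. r (r' k))"
    using strict_mono_o[OF r r'] by (simp add: o_def)
  ultimately show ?case
    by blast
qed

context
  fixes L :: "'a::metric_space \<Rightarrow> 'd::finite cmat \<Rightarrow> 'd cmat"
    and \<epsilon>0 :: 'a
  assumes isCont_L: "\<And>A. isCont (\<lambda>(\<epsilon>, A). L \<epsilon> A) (\<epsilon>0, A)"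
begin

lemma orth_invariant_family_limit:
  assumes "\<epsilon> \<longlonglongrightarrow> \<epsilon>0"
    and family: "\<And>k. orth_invariant_family (L (\<epsilon> k)) (\<rho>s k)" "\<And>k. length (\<rho>s k) = m"
    and lim: "\<And>j. j < m \<Longrightarrow> (\<lambda>k. \<rho>s k ! j) \<longlonglongrightarrow> \<rho> j"
  shows "orth_invariant_family (L \<epsilon>0) (map \<rho> [0..<m])"
  unfolding orth_invariant_family_def
proof (intro conjI ballI allI impI)
  have member: "density (\<rho>s k ! j) \<and> L (\<epsilon> k) (\<rho>s k ! j) = 0" if "j < m" for k j
    using family[of k] that nth_mem[of j "\<rho>s k"] unfolding orth_invariant_family_def by auto
  fix \<sigma> assume "\<sigma> \<in> set (map \<rho> [0..<m])"
  then obtain j where j: "j < m" "\<sigma> = \<rho> j"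
    by auto
  show "density \<sigma>"
    using density_limit[of "\<lambda>k. \<rho>s k ! j"] member lim j by auto
  have "(\<lambda>k. L (\<epsilon> k) (\<rho>s k ! j)) \<longlonglongrightarrow> L \<epsilon>0 (\<rho> j)"
    using isCont_tendsto_compose[OF isCont_L tendsto_Pair[OF assms(1) lim[OF j(1)]]] by simp
  then show "L \<epsilon>0 \<sigma> = 0"
    using member j by (simp add: LIMSEQ_const_iff)
next
  fix j k assume "j < length (map \<rho> [0..<m])" "k < length (map \<rho> [0..<m])" "j \<noteq> k"
  then have jk: "j < m" "k < m" "j \<noteq> k"
    by simp_all
  have "(\<lambda>n. \<rho>s n ! j ** \<rho>s n ! k) \<longlonglongrightarrow> \<rho> j ** \<rho> k"
    using jk by (intro tendsto_matrix_mult lim)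
  moreover have "\<rho>s n ! j ** \<rho>s n ! k = 0" for n
    using family[of n] jk unfolding orth_invariant_family_def by simp
  ultimately show "map \<rho> [0..<m] ! j ** map \<rho> [0..<m] ! k = 0"
    using jk by (simp add: LIMSEQ_const_iff del: upt_Suc)
qed

lemma orth_invariant_family_limit_exists:
  assumes "\<epsilon> \<longlonglongrightarrow> \<epsilon>0"
    and family: "\<And>k. orth_invariant_family (L (\<epsilon> k)) (\<rho>s k)" "\<And>k. length (\<rho>s k) = m"
  shows "\<exists>\<sigma>s. length \<sigma>s = m \<and> orth_invariant_family (L \<epsilon>0) \<sigma>s"
proof -
  have "density (\<rho>s k ! j)" if "j < m" for k j
    using family[of k] that nth_mem[of j "\<rho>s k"] unfolding orth_invariant_family_def by auto
  then obtain r \<rho> where r: "strict_mono r" and lim: "\<forall>j<m. (\<lambda>k. \<rho>s (r k) ! j) \<longlonglongrightarrow> \<rho> j"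
    using seq_compact_simultaneous_subseq[OF seq_compact_density, of m "\<lambda>k j. \<rho>s k ! j"] by blast
  have "(\<lambda>k. \<epsilon> (r k)) \<longlonglongrightarrow> \<epsilon>0"
    using LIMSEQ_subseq_LIMSEQ[OF assms(1) r] by (simp add: o_def)
  then have "orth_invariant_family (L \<epsilon>0) (map \<rho> [0..<m])"
    using lim family by (intro orth_invariant_family_limit) auto
  moreover have "length (map \<rho> [0..<m]) = m"
    by simp
  ultimately show ?thesis
    by blast
qed

lemma eventually_max_orth_invariant_le:
  "eventually (\<lambda>\<epsilon>. max_orth_invariant (L \<epsilon>) \<le> max_orth_invariant (L \<epsilon>0)) (at \<epsilon>0)"
proof (rule ccontr)
  define N where "N = max_orth_invariant (L \<epsilon>0)"
  assume not_eventually: "\<not> ?thesis"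
  have "\<exists>\<epsilon>. dist \<epsilon> \<epsilon>0 < inverse (Suc k) \<and> Suc N \<le> max_orth_invariant (L \<epsilon>)" for k :: nat
  proof -
    have "inverse (real (Suc k)) > 0"
      by simp
    then show ?thesis
      using not_eventually unfolding eventually_at N_def not_le[symmetric] Suc_le_eq by blast
  qed
  then obtain \<epsilon> where close: "\<And>k. dist (\<epsilon> k) \<epsilon>0 < inverse (Suc k)"
    and more: "\<And>k. Suc N \<le> max_orth_invariant (L (\<epsilon> k))"
    by metis
  have "(\<lambda>k. dist (\<epsilon> k) \<epsilon>0) \<longlonglongrightarrow> 0"
  proof (rule tendsto_sandwich[OF _ _ tendsto_const LIMSEQ_inverse_real_of_nat])
    show "eventually (\<lambda>k. 0 \<le> dist (\<epsilon> k) \<epsilon>0) sequentially"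
      by simp
    show "eventually (\<lambda>k. dist (\<epsilon> k) \<epsilon>0 \<le> inverse (Suc k)) sequentially"
      using close by (simp add: less_imp_le)
  qed
  then have "\<epsilon> \<longlonglongrightarrow> \<epsilon>0"
    using tendsto_dist_iff by blast
  moreover obtain \<rho>s where "\<And>k. length (\<rho>s k) = Suc N" "\<And>k. orth_invariant_family (L (\<epsilon> k)) (\<rho>s k)"
    using orth_invariant_family_exists[OF more] by metis
  ultimately obtain \<sigma>s where "length \<sigma>s = Suc N" "orth_invariant_family (L \<epsilon>0) \<sigma>s"
    using orth_invariant_family_limit_exists by blast
  then show False
    using max_orth_invariant_ge[of "L \<epsilon>0" \<sigma>s] unfolding N_def by simp
qed

end

theorem lemma1:
  fixes L0 L1 :: "'d::finite cmat \<Rightarrow> 'd cmat"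
  assumes "lindblad_form L0" and "lindblad_form L1"
  shows "\<exists>\<delta>>0. \<forall>\<epsilon>::real. 0 < \<epsilon> \<and> \<epsilon> < \<delta> \<longrightarrow>
           max_orth_invariant (perturbed L0 L1 \<epsilon>) \<le> max_orth_invariant (perturbed L0 L1 0)"
proof -
  have "eventually (\<lambda>\<epsilon>. max_orth_invariant (perturbed L0 L1 \<epsilon>) \<le> max_orth_invariant (perturbed L0 L1 0))
          (at (0::real))"
    by (rule eventually_max_orth_invariant_le) (rule isCont_perturbed[OF assms])
  then obtain \<delta> where "\<delta> > 0" "\<And>\<epsilon>::real. \<epsilon> \<noteq> 0 \<Longrightarrow> \<bar>\<epsilon>\<bar> < \<delta> \<Longrightarrow>
      max_orth_invariant (perturbed L0 L1 \<epsilon>) \<le> max_orth_invariant (perturbed L0 L1 0)"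
    unfolding eventually_at dist_real_def by auto
  then show ?thesis
    by auto
qed

end
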